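(* Let $D$ be a $3$-dicritical semi-complete digraph. Then $D$ does not contain any tournament of $\mathcal{T}_8$ as an induced subdigraph.
   Context: A digraph is semi-complete if every two distinct vertices are joined by at least one arc. A $2$-dicolouring is a map to $\{1,2\}$ whose colour classes induce acyclic subdigraphs. $D$ is $3$-dicritical if $D$ has no $2$-dicolouring but every proper subdigraph has one. $TT_8$ is the acyclic tournament on 8 vertices, and $\mathcal{T}_8$ is the set of tournaments obtained from $TT_8$ by reversing exactly one arc. *)

theory Defs
  imports Main
begin

text \<open>A digraph is a finite vertex set V with an arc set A \<subseteq> V \<times> V, without loops
  (digons, i.e. both (u,v) and (v,u), are allowed; no parallel arcs).\<close>
definition digraph :: "'a set \<Rightarrow> ('a \<times> 'a) set \<Rightarrow> bool" where
  "digraph V A \<longleftrightarrow> finite V \<and> A \<subseteq> V \<times> V \<and> irrefl A"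

definition semicomplete :: "'a set \<Rightarrow> ('a \<times> 'a) set \<Rightarrow> bool" where
  "semicomplete V A \<longleftrightarrow> (\<forall>u\<in>V. \<forall>v\<in>V. u \<noteq> v \<longrightarrow> (u,v) \<in> A \<or> (v,u) \<in> A)"

definition induced_arcs :: "('a \<times> 'a) set \<Rightarrow> 'a set \<Rightarrow> ('a \<times> 'a) set" where
  "induced_arcs A X = A \<inter> (X \<times> X)"

definition two_dicolouring :: "'a set \<Rightarrow> ('a \<times> 'a) set \<Rightarrow> ('a \<Rightarrow> nat) \<Rightarrow> bool" where
  "two_dicolouring V A c \<longleftrightarrow> c ` V \<subseteq> {1, 2} \<and>
     (\<forall>i\<in>{1, 2}. acyclic (induced_arcs A {v\<in>V. c v = i}))"

definition two_dicolourable :: "'a set \<Rightarrow> ('a \<times> 'a) set \<Rightarrow> bool" where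
  "two_dicolourable V A \<longleftrightarrow> (\<exists>c. two_dicolouring V A c)"

definition proper_subdigraph :: "'a set \<Rightarrow> ('a \<times> 'a) set \<Rightarrow> 'a set \<Rightarrow> ('a \<times> 'a) set \<Rightarrow> bool" where
  "proper_subdigraph V' A' V A \<longleftrightarrow> V' \<subseteq> V \<and> A' \<subseteq> A \<and> A' \<subseteq> V' \<times> V' \<and> (V', A') \<noteq> (V, A)"

definition dicritical3 :: "'a set \<Rightarrow> ('a \<times> 'a) set \<Rightarrow> bool" where
  "dicritical3 V A \<longleftrightarrow> digraph V A \<and> \<not> two_dicolourable V A \<and>
     (\<forall>V' A'. proper_subdigraph V' A' V A \<longrightarrow> two_dicolourable V' A')"

definition TT8 :: "(nat \<times> nat) set" where
  "TT8 = {(i, j). i < j \<and> j < 8}"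

text \<open>The tournament of T_8 obtained from TT_8 by reversing the arc (a,b).\<close>
definition T8_rev :: "nat \<Rightarrow> nat \<Rightarrow> (nat \<times> nat) set" where
  "T8_rev a b = (TT8 - {(a, b)}) \<union> {(b, a)}"

definition contains_induced :: "'a set \<Rightarrow> ('a \<times> 'a) set \<Rightarrow> 'b set \<Rightarrow> ('b \<times> 'b) set \<Rightarrow> bool" where
  "contains_induced V A W B \<longleftrightarrow> (\<exists>f. inj_on f W \<and> f ` W \<subseteq> V \<and>
     (\<forall>x\<in>W. \<forall>y\<in>W. (f x, f y) \<in> A \<longleftrightarrow> (x, y) \<in> B))"

end

theory Submission
  imports Defs
begin

text \<open>Deleting an end of the reversed arc from a tournament of \<open>\<T>\<^sub>8\<close> leaves \<open>TT\<^sub>7\<close>, so it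
  suffices to exclude an induced \<open>TT\<^sub>6\<close> \<open>y\<^sub>0 \<rightarrow> \<dots> \<rightarrow> y\<^sub>5\<close>. For an arc \<open>st\<close> of a 3-dicritical
  digraph, a 2-dicolouring of \<open>D - st\<close> puts \<open>s\<close> and \<open>t\<close> into a class \<open>S\<close> containing a path
  from \<open>t\<close> back to \<open>s\<close>, while the other class \<open>K\<close> is acyclic. So every \<open>z\<close> with
  \<open>s \<rightarrow> z \<rightarrow> t\<close> lies in \<open>K\<close>, and if \<open>ts\<close> is not an arc, the first vertex \<open>w\<close> of that path
  closes a triangle \<open>s \<rightarrow> t \<rightarrow> w \<rightarrow> s\<close> of simple arcs whose neighbourhoods are again forced into
  \<open>K\<close>. Applied to the arcs \<open>y\<^sub>i y\<^sub>i\<^sub>+\<^sub>1\<close>, these constraints on the eleven vertices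
  \<open>y\<^sub>i\<close>, \<open>w\<^sub>i\<close> and semi-completeness are contradictory.\<close>

definition TT :: "nat \<Rightarrow> (nat \<times> nat) set" where
  "TT n = {(i, j). i < j \<and> j < n}"

lemma contains_induced_trans:
  assumes "contains_induced U C V A" and "contains_induced V A W B"
  shows "contains_induced U C W B"
proof -
  obtain f where f: "inj_on f V" "f ` V \<subseteq> U" "\<forall>x\<in>V. \<forall>y\<in>V. (f x, f y) \<in> C \<longleftrightarrow> (x, y) \<in> A"
    using assms(1) by (auto simp: contains_induced_def)
  obtain g where g: "inj_on g W" "g ` W \<subseteq> V" "\<forall>x\<in>W. \<forall>y\<in>W. (g x, g y) \<in> A \<longleftrightarrow> (x, y) \<in> B"
    using assms(2) by (auto simp: contains_induced_def)
  have "inj_on (f \<circ> g) W"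
    using f(1) g(1,2) by (simp add: comp_inj_on inj_on_subset)
  moreover have "(f \<circ> g) ` W \<subseteq> U"
    using f(2) g(2) by auto
  moreover have "(f (g x), f (g y)) \<in> C \<longleftrightarrow> (x, y) \<in> B" if "x \<in> W" "y \<in> W" for x y
    using f(3) g(2,3) that by (auto simp: image_subset_iff)
  ultimately show ?thesis
    unfolding contains_induced_def by (intro exI[of _ "f \<circ> g"]) auto
qed

lemma contains_induced_TT_mono:
  "m \<le> n \<Longrightarrow> contains_induced {0..<n} (TT n) {0..<m} (TT m)"
  unfolding contains_induced_def TT_def by (intro exI[of _ id]) simp

lemma T8_rev_contains_TT7:
  assumes "(a, b) \<in> TT8"
  shows "contains_induced {0..<8} (T8_rev a b) {0..<7} (TT 7)"
proof -
  define g :: "nat \<Rightarrow> nat" where "g k = (if k < a then k else Suc k)" for k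
  have g_neq: "g k \<noteq> a" for k
    by (simp add: g_def)
  have g_less_iff: "g k < g l \<longleftrightarrow> k < l" for k l
    by (simp add: g_def)
  have g_range: "g k < 8" if "k < 7" for k
    using assms that by (simp add: g_def TT8_def)
  have "strict_mono g"
    by (simp add: strict_mono_def g_less_iff)
  then have "inj_on g {0..<7}"
    by (simp add: strict_mono_imp_inj_on)
  moreover have "g ` {0..<7} \<subseteq> {0..<8}"
    using g_range by auto
  moreover have "(g k, g l) \<in> T8_rev a b \<longleftrightarrow> (k, l) \<in> TT 7" if "k < 7" "l < 7" for k l
    using that g_neq[of k] g_neq[of l] g_range[of l] by (simp add: T8_rev_def TT8_def TT_def g_less_iff)
  ultimately show ?thesis
    unfolding contains_induced_def by (intro exI[of _ g]) simp
qed

lemma acyclic_rtrancl_not_arc: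
  assumes "acyclic R" and "(v, u) \<in> R\<^sup>*"
  shows "(u, v) \<notin> R"
proof
  assume "(u, v) \<in> R"
  then have "(u, u) \<in> R\<^sup>+"
    using assms(2) by (rule trancl_rtrancl_trancl[OF r_into_trancl])
  with assms(1) show False
    by (simp add: acyclic_def)
qed

lemma acyclic_no_3cycle:
  assumes "acyclic R" and "(a, b) \<in> R" and "(b, c) \<in> R"
  shows "(c, a) \<notin> R"
  using assms(2,3) by (intro acyclic_rtrancl_not_arc[OF assms(1)]) auto

text \<open>Any 2-dicolouring of \<open>D - st\<close> puts \<open>s\<close> and \<open>t\<close> into one class \<open>S\<close>, and \<open>D[S]\<close> has a
  cycle, which must use \<open>st\<close>.\<close>
lemma dicritical3_arc_split:
  assumes dc: "dicritical3 V A" and st: "(s, t) \<in> A"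
  obtains S where "S \<subseteq> V" "s \<in> S" "t \<in> S"
    "acyclic (Restr (A - {(s, t)}) S)" "(t, s) \<in> (Restr (A - {(s, t)}) S)\<^sup>*"
    "acyclic (Restr A (V - S))"
proof -
  have AV: "A \<subseteq> V \<times> V" and not_col: "\<not> two_dicolourable V A"
    using dc by (auto simp: dicritical3_def digraph_def)
  have "proper_subdigraph V (A - {(s, t)}) V A"
    using AV st by (auto simp: proper_subdigraph_def)
  then obtain c where c: "two_dicolouring V (A - {(s, t)}) c"
    using dc unfolding dicritical3_def two_dicolourable_def by blast
  define colour where "colour i = {v \<in> V. c v = i}" for i
  have cV: "c ` V \<subseteq> {1, 2}"
    and acyc: "\<And>i. i \<in> {1, 2} \<Longrightarrow> acyclic (Restr (A - {(s, t)}) (colour i))"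
    using c by (auto simp: two_dicolouring_def induced_arcs_def colour_def)
  have "\<not> two_dicolouring V A c"
    using not_col by (auto simp: two_dicolourable_def)
  then obtain i where i: "i \<in> {1, 2}" and not_acyc: "\<not> acyclic (Restr A (colour i))"
    using cV unfolding two_dicolouring_def induced_arcs_def colour_def by blast
  define S where "S = colour i"
  define R where "R = Restr (A - {(s, t)}) S"
  have acyc_R: "acyclic R"
    using acyc[OF i] by (simp add: R_def S_def)
  have st_S: "s \<in> S \<and> t \<in> S"
  proof (rule ccontr)
    assume "\<not> (s \<in> S \<and> t \<in> S)"
    then have "Restr A S = R" by (auto simp: R_def)
    with not_acyc acyc_R show False by (simp add: S_def)
  qed
  have "Restr A S = insert (s, t) R"
    using st_S st by (auto simp: R_def)
  then have path_ts: "(t, s) \<in> R\<^sup>*"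
    using not_acyc acyc_R by (simp add: S_def)
  have "V - S = colour (3 - i)"
    using cV i by (auto simp: S_def colour_def)
  then have "Restr A (V - S) = Restr (A - {(s, t)}) (colour (3 - i))"
    using st_S by auto
  moreover have "3 - i \<in> {1, 2}"
    using i by auto
  ultimately have acyc_K: "acyclic (Restr A (V - S))"
    using acyc by simp
  have "S \<subseteq> V"
    by (simp add: S_def colour_def)
  then show ?thesis
    using that st_S acyc_R path_ts acyc_K unfolding R_def by blast
qed

lemma between_not_in_class:
  assumes acyc: "acyclic (Restr (A - {(s, t)}) S)" and path: "(t, s) \<in> (Restr (A - {(s, t)}) S)\<^sup>*"
    and "s \<in> S" "t \<in> S" and sz: "(s, z) \<in> A" and zt: "(z, t) \<in> A" and "z \<noteq> s" "z \<noteq> t"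
  shows "z \<notin> S"
proof
  assume "z \<in> S"
  with assms have "(z, t) \<in> Restr (A - {(s, t)}) S"
    by simp
  then have "(z, s) \<in> (Restr (A - {(s, t)}) S)\<^sup>*"
    using path by (rule converse_rtrancl_into_rtrancl)
  with acyc have "(s, z) \<notin> Restr (A - {(s, t)}) S"
    by (rule acyclic_rtrancl_not_arc)
  with \<open>z \<in> S\<close> assms show False
    by simp
qed

lemma dicritical3_between_acyclic:
  assumes dc: "dicritical3 V A" and st: "(s, t) \<in> A"
  shows "acyclic (Restr A {z. (s, z) \<in> A \<and> (z, t) \<in> A})"
proof -
  obtain S where S: "s \<in> S" "t \<in> S"
    and acyc_R: "acyclic (Restr (A - {(s, t)}) S)"
    and path_ts: "(t, s) \<in> (Restr (A - {(s, t)}) S)\<^sup>*"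
    and acyc_K: "acyclic (Restr A (V - S))"
    using dicritical3_arc_split[OF dc st] by blast
  have AV: "A \<subseteq> V \<times> V" and irr: "\<And>u. (u, u) \<notin> A"
    using dc by (auto simp: dicritical3_def digraph_def irrefl_def)
  have "z \<in> V - S" if "(s, z) \<in> A" "(z, t) \<in> A" for z
    using between_not_in_class[OF acyc_R path_ts S that] that AV irr by blast
  then have "Restr A {z. (s, z) \<in> A \<and> (z, t) \<in> A} \<subseteq> Restr A (V - S)"
    by blast
  with acyc_K show ?thesis
    by (rule acyclic_subset)
qed

lemma dicritical3_between_no_3cycle:
  assumes "dicritical3 V A" and "(s, t) \<in> A"
    and "(s, p) \<in> A" "(p, t) \<in> A" "(s, q) \<in> A" "(q, t) \<in> A" "(s, r) \<in> A" "(r, t) \<in> A"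
    and "(p, q) \<in> A" "(q, r) \<in> A"
  shows "(r, p) \<notin> A"
proof -
  have "(r, p) \<notin> Restr A {z. (s, z) \<in> A \<and> (z, t) \<in> A}"
    by (rule acyclic_no_3cycle[OF dicritical3_between_acyclic[OF assms(1,2)]]) (use assms in auto)
  with assms show ?thesis
    by auto
qed

text \<open>\<open>K\<close> is the colour class avoiding \<open>s\<close> and \<open>t\<close> in \<open>dicritical3_arc_split\<close>, and \<open>w\<close>
  is the successor of \<open>t\<close> on the path from \<open>t\<close> to \<open>s\<close>.\<close>
definition arc_witness :: "('a \<times> 'a) set \<Rightarrow> 'a \<Rightarrow> 'a \<Rightarrow> 'a \<Rightarrow> 'a set \<Rightarrow> bool" where
  "arc_witness A s t w K \<longleftrightarrow>
     (t, w) \<in> A \<and> (w, s) \<in> A \<and> (w, t) \<notin> A \<and> (s, w) \<notin> A \<and> acyclic (Restr A K) \<and>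
     (\<forall>z. (s, z) \<in> A \<and> (z, t) \<in> A \<longrightarrow> z \<in> K) \<and>
     (\<forall>z. z \<noteq> t \<and> (s, z) \<in> A \<and> (z, w) \<in> A \<longrightarrow> z \<in> K) \<and>
     (\<forall>z. z \<noteq> s \<and> (w, z) \<in> A \<and> (z, t) \<in> A \<longrightarrow> z \<in> K)"

lemma dicritical3_arc_witness:
  assumes dc: "dicritical3 V A" and sc: "semicomplete V A"
    and st: "(s, t) \<in> A" and ts: "(t, s) \<notin> A"
  shows "\<exists>w K. arc_witness A s t w K"
proof -
  obtain S where S: "S \<subseteq> V" "s \<in> S" "t \<in> S"
    and acyc_R: "acyclic (Restr (A - {(s, t)}) S)"
    and path_ts: "(t, s) \<in> (Restr (A - {(s, t)}) S)\<^sup>*"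
    and acyc_K: "acyclic (Restr A (V - S))"
    using dicritical3_arc_split[OF dc st] by blast
  define R where "R = Restr (A - {(s, t)}) S"
  have AV: "A \<subseteq> V \<times> V" and irr: "\<And>u. (u, u) \<notin> A"
    using dc by (auto simp: dicritical3_def digraph_def irrefl_def)
  have no_back_arc: "(u, v) \<notin> A"
    if "u \<in> S" "v \<in> S" "u \<noteq> s \<or> v \<noteq> t" "(v, u) \<in> R\<^sup>*" for u v
    using acyclic_rtrancl_not_arc[of R v u] acyc_R that by (auto simp: R_def)
  have "(t, s) \<in> R\<^sup>+"
    using path_ts st irr unfolding R_def by (metis rtranclD)
  then obtain w where tw: "(t, w) \<in> R" and ws: "(w, s) \<in> R\<^sup>*"
    by (auto dest: tranclD)
  have w: "w \<in> S" "(t, w) \<in> A" "w \<noteq> s" "w \<noteq> t"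
    using tw ts irr by (auto simp: R_def)
  have not_wt: "(w, t) \<notin> A"
    using no_back_arc w S tw by blast
  have not_sw: "(s, w) \<notin> A"
    using no_back_arc w S ws by blast
  have ws_A: "(w, s) \<in> A"
    using sc not_sw w S unfolding semicomplete_def by blast
  have between: "z \<in> V - S" if "(s, z) \<in> A" "(z, t) \<in> A" for z
    using between_not_in_class[OF acyc_R path_ts S(2,3) that] that AV irr by blast
  have before_w: "z \<in> V - S" if "z \<noteq> t" "(s, z) \<in> A" "(z, w) \<in> A" for z
  proof -
    have "z \<notin> S"
    proof
      assume "z \<in> S"
      with that w irr have "(z, s) \<in> R\<^sup>*"
        using ws by (auto simp: R_def intro: converse_rtrancl_into_rtrancl)
      with no_back_arc \<open>z \<in> S\<close> S that(1,2) show False by blast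
    qed
    with that AV show ?thesis by auto
  qed
  have after_w: "z \<in> V - S" if "z \<noteq> s" "(w, z) \<in> A" "(z, t) \<in> A" for z
  proof -
    have "z \<notin> S"
    proof
      assume "z \<in> S"
      with that w have "(t, z) \<in> R\<^sup>*"
        using tw by (auto simp: R_def intro: rtrancl_into_rtrancl)
      with no_back_arc \<open>z \<in> S\<close> S that(1,3) show False by blast
    qed
    with that AV show ?thesis by auto
  qed
  have "arc_witness A s t w (V - S)"
    unfolding arc_witness_def
    using w(2) ws_A not_wt not_sw acyc_K between before_w after_w by blast
  then show ?thesis by blast
qed

lemma dicritical3_semicomplete_not_contains_TT6:
  assumes dc: "dicritical3 V A" and sc: "semicomplete V A"
  shows "\<not> contains_induced V A {0..<6} (TT 6)"
proof
  assume "contains_induced V A {0..<6} (TT 6)"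
  then obtain y :: "nat \<Rightarrow> 'a" where y_range: "y ` {0..<6} \<subseteq> V"
    and y_arcs: "\<forall>i\<in>{0..<6}. \<forall>j\<in>{0..<6}. (y i, y j) \<in> A \<longleftrightarrow> (i, j) \<in> TT 6"
    unfolding contains_induced_def by blast
  have yV: "y i \<in> V" if "i < 6" for i
    using y_range that by auto
  have yA: "(y i, y j) \<in> A \<longleftrightarrow> i < j" if "i < 6" "j < 6" for i j
    using y_arcs that by (simp add: TT_def)
  have "\<exists>w K. arc_witness A (y i) (y j) w K" if "i < j" "j < 6" for i j
    using dicritical3_arc_witness[OF dc sc] yA that by simp
  then obtain w K
    where W: "\<And>i j. i < j \<Longrightarrow> j < 6 \<Longrightarrow> arc_witness A (y i) (y j) (w i j) (K i j)"
    by metis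
  have AV: "A \<subseteq> V \<times> V" and irr: "\<And>u. (u, u) \<notin> A"
    using dc by (auto simp: dicritical3_def digraph_def irrefl_def)
  have wV: "w i j \<in> V" if "i < j" "j < 6" for i j
    using W[OF that] AV by (auto simp: arc_witness_def)
  have adjacent: "\<And>u v. u \<in> V \<Longrightarrow> v \<in> V \<Longrightarrow> u = v \<or> (u, v) \<in> A \<or> (v, u) \<in> A"
    using sc by (auto simp: semicomplete_def)
  have w_arcs: "(y j, w i j) \<in> A \<and> (w i j, y i) \<in> A \<and> (w i j, y j) \<notin> A \<and> (y i, w i j) \<notin> A"
    if "i < j" "j < 6" for i j
    using W[OF that] by (simp add: arc_witness_def)
  have K_between: "z \<in> K i j" if "i < j" "j < 6" "(y i, z) \<in> A" "(z, y j) \<in> A" for i j z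
    using W[OF that(1,2)] that by (simp add: arc_witness_def)
  have K_before_w: "z \<in> K i j" if "i < j" "j < 6" "z \<noteq> y j" "(y i, z) \<in> A" "(z, w i j) \<in> A"
    for i j z
    using W[OF that(1,2)] that by (simp add: arc_witness_def)
  have K_after_w: "z \<in> K i j" if "i < j" "j < 6" "z \<noteq> y i" "(w i j, z) \<in> A" "(z, y j) \<in> A"
    for i j z
    using W[OF that(1,2)] that by (simp add: arc_witness_def)
  have K_no_3cycle: "(r, p) \<notin> A"
    if "i < j" "j < 6" "p \<in> K i j" "q \<in> K i j" "r \<in> K i j" "(p, q) \<in> A" "(q, r) \<in> A" for i j p q r
    using W[OF that(1,2)] that acyclic_no_3cycle[of "Restr A (K i j)" p q r]
    by (simp add: arc_witness_def)
  note between_no_3cycle = dicritical3_between_no_3cycle[OF dc]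
  \<comment> \<open>A propositionally contradictory selection of instances of the facts above, found by
    computer search.\<close>
  note certificate =
    between_no_3cycle[of "w 0 1" "w 2 3" "y 3" "y 4" "w 3 4"]
    between_no_3cycle[of "w 0 1" "y 2" "y 0" "w 2 3" "w 3 4"]
    between_no_3cycle[of "w 0 1" "y 2" "y 0" "w 3 4" "w 2 3"]
    between_no_3cycle[of "w 0 1" "y 3" "y 0" "y 2" "w 1 2"]
    between_no_3cycle[of "w 0 1" "y 4" "y 0" "y 2" "w 1 2"]
    between_no_3cycle[of "w 0 1" "y 4" "y 2" "y 3" "w 2 3"]
    between_no_3cycle[of "w 0 1" "y 5" "y 3" "y 4" "w 3 4"]
    between_no_3cycle[of "w 1 2" "w 2 3" "y 3" "y 4" "w 3 4"]
    between_no_3cycle[of "w 1 2" "w 3 4" "y 0" "y 4" "w 2 3"]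
    between_no_3cycle[of "w 1 2" "w 3 4" "y 4" "y 5" "w 4 5"]
    between_no_3cycle[of "w 1 2" "y 3" "y 0" "y 1" "w 0 1"]
    between_no_3cycle[of "w 1 2" "y 4" "y 0" "y 1" "w 0 1"]
    between_no_3cycle[of "w 1 2" "y 4" "y 0" "y 3" "w 2 3"]
    between_no_3cycle[of "w 2 3" "w 0 1" "y 1" "y 2" "w 1 2"]
    between_no_3cycle[of "w 2 3" "w 3 4" "y 1" "y 2" "w 1 2"]
    between_no_3cycle[of "w 2 3" "y 2" "y 0" "y 1" "w 0 1"]
    between_no_3cycle[of "w 2 3" "y 4" "y 0" "y 1" "w 0 1"]
    between_no_3cycle[of "w 2 3" "y 4" "y 1" "y 2" "w 1 2"]
    between_no_3cycle[of "w 2 3" "y 5" "y 0" "y 2" "w 0 1"]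
    between_no_3cycle[of "w 2 3" "y 5" "y 1" "y 2" "w 1 2"]
    between_no_3cycle[of "w 3 4" "w 0 1" "y 1" "y 3" "w 1 2"]
    between_no_3cycle[of "w 3 4" "w 0 1" "y 2" "y 3" "w 2 3"]
    between_no_3cycle[of "w 3 4" "w 1 2" "y 0" "y 3" "w 0 1"]
    between_no_3cycle[of "w 3 4" "w 1 2" "y 2" "y 3" "w 2 3"]
    between_no_3cycle[of "w 3 4" "w 2 3" "y 0" "y 1" "w 0 1"]
    between_no_3cycle[of "w 3 4" "w 4 5" "y 2" "y 3" "w 2 3"]
    between_no_3cycle[of "w 3 4" "y 2" "y 0" "y 1" "w 0 1"]
    between_no_3cycle[of "w 3 4" "y 2" "y 0" "y 1" "w 2 3"]
    between_no_3cycle[of "w 3 4" "y 3" "y 0" "y 1" "w 0 1"]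
    between_no_3cycle[of "w 3 4" "y 3" "y 1" "y 2" "w 1 2"]
    between_no_3cycle[of "w 4 5" "w 2 3" "y 3" "y 4" "w 3 4"]
    between_no_3cycle[of "w 4 5" "w 3 4" "y 2" "y 4" "w 2 3"]
    between_no_3cycle[of "y 0" "w 1 2" "y 2" "y 3" "w 2 3"]
    between_no_3cycle[of "y 0" "w 1 2" "y 3" "y 4" "w 3 4"]
    between_no_3cycle[of "y 0" "w 2 3" "y 1" "y 3" "w 1 2"]
    between_no_3cycle[of "y 0" "w 2 3" "y 3" "y 4" "w 3 4"]
    between_no_3cycle[of "y 0" "w 2 3" "y 4" "y 5" "w 4 5"]
    between_no_3cycle[of "y 0" "w 3 4" "y 1" "y 2" "w 1 2"]
    between_no_3cycle[of "y 0" "w 3 4" "y 2" "y 4" "w 2 3"]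
    between_no_3cycle[of "y 0" "y 3" "y 1" "y 2" "w 1 2"]
    between_no_3cycle[of "y 0" "y 3" "y 1" "y 2" "w 3 4"]
    between_no_3cycle[of "y 0" "y 4" "y 1" "y 2" "w 1 2"]
    between_no_3cycle[of "y 0" "y 4" "y 2" "y 3" "w 2 3"]
    between_no_3cycle[of "y 0" "y 4" "y 2" "y 3" "w 4 5"]
    between_no_3cycle[of "y 0" "y 5" "y 1" "y 2" "w 1 2"]
    between_no_3cycle[of "y 0" "y 5" "y 2" "y 3" "w 2 3"]
    between_no_3cycle[of "y 0" "y 5" "y 2" "y 4" "w 3 4"]
    between_no_3cycle[of "y 1" "w 0 1" "y 2" "y 4" "w 2 3"]
    between_no_3cycle[of "y 1" "w 0 1" "y 3" "y 4" "w 3 4"]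
    between_no_3cycle[of "y 1" "w 2 3" "y 3" "y 4" "w 0 1"]
    between_no_3cycle[of "y 1" "w 2 3" "y 3" "y 4" "w 3 4"]
    between_no_3cycle[of "y 1" "w 3 4" "y 2" "y 4" "w 0 1"]
    between_no_3cycle[of "y 1" "w 3 4" "y 2" "y 4" "w 2 3"]
    between_no_3cycle[of "y 1" "y 3" "y 2" "w 3 4" "w 0 1"]
    between_no_3cycle[of "y 1" "y 4" "y 2" "y 3" "w 0 1"]
    between_no_3cycle[of "y 1" "y 4" "y 2" "y 3" "w 2 3"]
    between_no_3cycle[of "y 1" "y 5" "y 2" "y 3" "w 2 3"]
    between_no_3cycle[of "y 1" "y 5" "y 2" "y 4" "w 0 1"]
    between_no_3cycle[of "y 1" "y 5" "y 3" "y 4" "w 3 4"]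
    between_no_3cycle[of "y 2" "w 0 1" "y 3" "y 4" "w 1 2"]
    between_no_3cycle[of "y 2" "w 1 2" "y 3" "y 4" "w 3 4"]
    between_no_3cycle[of "y 2" "w 3 4" "y 4" "w 0 1" "w 1 2"]
    between_no_3cycle[of "y 2" "w 3 4" "y 4" "y 5" "w 4 5"]
    between_no_3cycle[of "y 2" "w 4 5" "y 3" "y 5" "w 3 4"]
    between_no_3cycle[of "y 2" "y 4" "y 3" "w 0 1" "w 1 2"]
    between_no_3cycle[of "y 2" "y 4" "y 3" "w 4 5" "w 1 2"]
    between_no_3cycle[of "y 2" "y 5" "y 3" "y 4" "w 3 4"]
    between_no_3cycle[of "y 2" "y 5" "y 4" "w 0 1" "w 1 2"]
    between_no_3cycle[of "y 3" "w 2 3" "y 4" "y 5" "w 4 5"]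
    K_no_3cycle[of 0 1 "y 2" "y 3" "w 2 3"]
    K_no_3cycle[of 1 2 "y 0" "w 2 3" "w 0 1"]
    K_no_3cycle[of 1 2 "y 0" "w 2 3" "w 3 4"]
    K_no_3cycle[of 1 2 "y 0" "w 3 4" "w 0 1"]
    K_no_3cycle[of 1 2 "y 0" "w 3 4" "w 2 3"]
    K_no_3cycle[of 1 2 "y 0" "y 3" "w 0 1"]
    K_no_3cycle[of 1 2 "y 0" "y 3" "w 2 3"]
    K_no_3cycle[of 1 2 "y 0" "y 4" "w 0 1"]
    K_no_3cycle[of 1 2 "y 0" "y 5" "w 0 1"]
    K_no_3cycle[of 1 2 "y 3" "y 4" "w 0 1"]
    K_no_3cycle[of 1 2 "y 3" "y 4" "w 3 4"]
    K_no_3cycle[of 2 3 "y 0" "y 1" "w 0 1"]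
    K_no_3cycle[of 2 3 "y 0" "y 1" "w 3 4"]
    K_no_3cycle[of 2 3 "y 0" "y 4" "w 3 4"]
    K_no_3cycle[of 2 3 "y 1" "w 0 1" "w 1 2"]
    K_no_3cycle[of 2 3 "y 1" "w 3 4" "w 1 2"]
    K_no_3cycle[of 2 3 "y 1" "y 4" "w 1 2"]
    K_no_3cycle[of 2 3 "y 1" "y 4" "w 3 4"]
    K_no_3cycle[of 2 3 "y 1" "y 5" "w 1 2"]
    K_no_3cycle[of 2 3 "y 4" "w 1 2" "w 0 1"]
    K_no_3cycle[of 2 3 "y 4" "y 5" "w 0 1"]
    K_no_3cycle[of 2 3 "y 4" "y 5" "w 4 5"]
    K_no_3cycle[of 3 4 "y 0" "y 1" "w 0 1"]
    K_no_3cycle[of 3 4 "y 0" "y 2" "w 1 2"]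
    K_no_3cycle[of 3 4 "y 0" "y 5" "w 4 5"]
    K_no_3cycle[of 3 4 "y 1" "y 5" "w 1 2"]
    K_no_3cycle[of 3 4 "y 2" "y 5" "w 2 3"]
    K_no_3cycle[of 3 4 "y 2" "y 5" "w 4 5"]
    K_no_3cycle[of 3 4 "y 5" "w 0 1" "w 1 2"]
    K_between[of 0 1 "w 2 3"]
    K_between[of 1 2 "w 0 1"]
    K_between[of 1 2 "w 2 3"]
    K_between[of 1 2 "w 3 4"]
    K_between[of 2 3 "w 0 1"]
    K_between[of 2 3 "w 1 2"]
    K_between[of 2 3 "w 3 4"]
    K_between[of 2 3 "w 4 5"]
    K_between[of 3 4 "w 4 5"]
    K_before_w[of 0 1 "y 2"]
    K_before_w[of 0 1 "y 3"]
    K_before_w[of 1 2 "w 0 1"]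
    K_before_w[of 1 2 "y 3"]
    K_before_w[of 1 2 "y 4"]
    K_before_w[of 1 2 "y 5"]
    K_before_w[of 2 3 "w 0 1"]
    K_before_w[of 2 3 "w 1 2"]
    K_before_w[of 2 3 "y 4"]
    K_before_w[of 2 3 "y 5"]
    K_before_w[of 3 4 "w 0 1"]
    K_before_w[of 3 4 "w 1 2"]
    K_before_w[of 3 4 "w 2 3"]
    K_before_w[of 3 4 "y 5"]
    K_after_w[of 1 2 "w 2 3"]
    K_after_w[of 1 2 "w 3 4"]
    K_after_w[of 1 2 "y 0"]
    K_after_w[of 2 3 "w 3 4"]
    K_after_w[of 2 3 "w 4 5"]
    K_after_w[of 2 3 "y 0"]
    K_after_w[of 2 3 "y 1"]
    K_after_w[of 3 4 "w 1 2"]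
    K_after_w[of 3 4 "w 4 5"]
    K_after_w[of 3 4 "y 0"]
    K_after_w[of 3 4 "y 1"]
    K_after_w[of 3 4 "y 2"]
    irr[of "y 0"] irr[of "y 1"] irr[of "y 2"] irr[of "y 3"] irr[of "y 4"] irr[of "y 5"]
    irr[of "w 0 1"] irr[of "w 1 2"] irr[of "w 2 3"] irr[of "w 3 4"] irr[of "w 4 5"]
    w_arcs[of 0 1] w_arcs[of 1 2] w_arcs[of 2 3] w_arcs[of 3 4] w_arcs[of 4 5]
    yA[of 0 1] yA[of 0 2] yA[of 0 3] yA[of 0 4] yA[of 0 5]
    yA[of 1 0] yA[of 1 2] yA[of 1 3] yA[of 1 4] yA[of 1 5]
    yA[of 2 0] yA[of 2 1] yA[of 2 3] yA[of 2 4] yA[of 2 5]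
    yA[of 3 0] yA[of 3 1] yA[of 3 2] yA[of 3 4] yA[of 3 5]
    yA[of 4 0] yA[of 4 1] yA[of 4 2] yA[of 4 3] yA[of 4 5]
    yA[of 5 0] yA[of 5 1] yA[of 5 2] yA[of 5 3] yA[of 5 4]
    adjacent[OF wV[of 0 1] wV[of 1 2]] adjacent[OF wV[of 0 1] wV[of 2 3]]
    adjacent[OF wV[of 0 1] wV[of 3 4]] adjacent[OF wV[of 1 2] wV[of 2 3]]
    adjacent[OF wV[of 1 2] wV[of 3 4]] adjacent[OF wV[of 1 2] wV[of 4 5]]
    adjacent[OF wV[of 2 3] wV[of 3 4]] adjacent[OF wV[of 2 3] wV[of 4 5]]
    adjacent[OF wV[of 3 4] wV[of 4 5]] adjacent[OF yV[of 0] wV[of 1 2]]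
    adjacent[OF yV[of 0] wV[of 2 3]] adjacent[OF yV[of 0] wV[of 3 4]]
    adjacent[OF yV[of 0] wV[of 4 5]] adjacent[OF yV[of 1] wV[of 2 3]]
    adjacent[OF yV[of 1] wV[of 3 4]] adjacent[OF yV[of 2] wV[of 0 1]]
    adjacent[OF yV[of 2] wV[of 3 4]] adjacent[OF yV[of 2] wV[of 4 5]]
    adjacent[OF yV[of 3] wV[of 0 1]] adjacent[OF yV[of 3] wV[of 1 2]]
    adjacent[OF yV[of 3] wV[of 4 5]] adjacent[OF yV[of 4] wV[of 0 1]]
    adjacent[OF yV[of 4] wV[of 1 2]] adjacent[OF yV[of 4] wV[of 2 3]]
    adjacent[OF yV[of 5] wV[of 0 1]] adjacent[OF yV[of 5] wV[of 1 2]]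
    adjacent[OF yV[of 5] wV[of 2 3]] adjacent[OF yV[of 5] wV[of 3 4]]
  show False
    using certificate[simplified] by smt
qed

theorem lemma26:
  fixes V :: "'a set" and A :: "('a \<times> 'a) set"
  assumes "dicritical3 V A" and "semicomplete V A"
  shows "\<not> (\<exists>a b. (a, b) \<in> TT8 \<and> contains_induced V A {0..<8} (T8_rev a b))"
proof
  assume "\<exists>a b. (a, b) \<in> TT8 \<and> contains_induced V A {0..<8} (T8_rev a b)"
  then obtain a b where "(a, b) \<in> TT8" and T8: "contains_induced V A {0..<8} (T8_rev a b)"
    by blast
  from T8 T8_rev_contains_TT7[OF \<open>(a, b) \<in> TT8\<close>]
  have "contains_induced V A {0..<7} (TT 7)"
    by (rule contains_induced_trans)
  moreover have "contains_induced {0..<7} (TT 7) {0..<6} (TT 6)"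
    by (rule contains_induced_TT_mono) simp
  ultimately have "contains_induced V A {0..<6} (TT 6)"
    by (rule contains_induced_trans)
  with dicritical3_semicomplete_not_contains_TT6[OF assms] show False
    by contradiction
qed

end
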